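(* Let $E$ and $F$ be Banach spaces and $M>0$. If $d_N(E,F)<M^2$, then there exist a constant $L\ge 0$ and a bijective coarse $(M,L)$-quasi isometry $T:E\to F$.
   Context: A subset $N$ of a metric space $E$ is an $(\varepsilon,\delta)$-net if every point of $E$ is at distance less than $\varepsilon$ from some point of $N$ and any two distinct points of $N$ are at distance at least $\delta$; a net is an $(\varepsilon,\delta)$-net for some $\varepsilon,\delta>0$. For a Lipschitz map $T$, $l(T)=\sup\{d(Tx,Ty)/d(x,y):x\ne y\}$. The net distance $d_N(E,F)$ is the infimum of $l(T)\,l(T^{-1})$ over all bijections $T:N_E\to N_F$ between nets $N_E\subset E$, $N_F\subset F$ with $T,T^{-1}$ Lipschitz. A map $T:E\to F$ is a coarse $(M,L)$-quasi isometry if $\frac{1}{M}\|x-y\|-L\le\|Tx-Ty\|\le M\|x-y\|+L$ for all $x,y\in E$ and $T(E)$ is $\xi$-dense in $F$ for some $\xi>0$ (every point of $F$ is within distance $\xi$ of $T(E)$). *)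

theory Defs
  imports "HOL-Analysis.Analysis"
begin

definition is_net_eps_delta :: "'a::metric_space set \<Rightarrow> real \<Rightarrow> real \<Rightarrow> 'a set \<Rightarrow> bool" where
  "is_net_eps_delta E \<epsilon> \<delta> N \<longleftrightarrow> N \<subseteq> E \<and>
     (\<forall>x\<in>E. \<exists>n\<in>N. dist x n < \<epsilon>) \<and>
     (\<forall>n\<in>N. \<forall>m\<in>N. n \<noteq> m \<longrightarrow> dist n m \<ge> \<delta>)"

definition is_net :: "'a::metric_space set \<Rightarrow> 'a set \<Rightarrow> bool" where
  "is_net E N \<longleftrightarrow> (\<exists>\<epsilon>>0. \<exists>\<delta>>0. is_net_eps_delta E \<epsilon> \<delta> N)"

definition lip_const :: "'a::metric_space set \<Rightarrow> ('a \<Rightarrow> 'b::metric_space) \<Rightarrow> real" where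
  "lip_const N T =
     (let R = {dist (T x) (T y) / dist x y | x y. x \<in> N \<and> y \<in> N \<and> x \<noteq> y}
      in if R = {} then 0 else Sup R)"

text \<open>Net distance d_N(E,F), valued in the extended reals (infimum of the empty set is +infinity).\<close>
definition net_distance :: "'a::metric_space set \<Rightarrow> 'b::metric_space set \<Rightarrow> ereal" where
  "net_distance E F = Inf {ereal (lip_const NE T * lip_const NF (inv_into NE T)) | NE NF T.
      is_net E NE \<and> is_net F NF \<and> bij_betw T NE NF \<and>
      (\<exists>C. C-lipschitz_on NE T) \<and> (\<exists>C. C-lipschitz_on NF (inv_into NE T))}"

definition coarse_quasi_isometry ::
  "real \<Rightarrow> real \<Rightarrow> ('a::real_normed_vector \<Rightarrow> 'b::real_normed_vector) \<Rightarrow> 'a set \<Rightarrow> 'b set \<Rightarrow> bool" where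
  "coarse_quasi_isometry M L T E F \<longleftrightarrow> T ` E \<subseteq> F \<and>
     (\<forall>x\<in>E. \<forall>y\<in>E. (1/M) * norm (x - y) - L \<le> norm (T x - T y) \<and>
                   norm (T x - T y) \<le> M * norm (x - y) + L) \<and>
     (\<exists>\<xi>>0. \<forall>y\<in>F. \<exists>x\<in>E. dist y (T x) \<le> \<xi>)"

end

theory Submission
  imports Defs
begin

text \<open>
  Take nets \<open>N\<^sub>E\<close>, \<open>N\<^sub>F\<close> and a bijection \<open>T\<close> between them with \<open>l(T) l(T\<^sup>-\<^sup>1) < M\<^sup>2\<close>; for a
  suitable \<open>c > 0\<close> both \<open>c T\<close> and its inverse are \<open>M\<close>-Lipschitz. A retraction onto a net
  cuts the space into bounded cells, one around each net point and each containing a ball.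
  With \<open>\<sigma>(y) = y / (1 + \<parallel>y\<parallel>)\<close> every ball of a normed space is equipotent to the whole
  space, and \<open>E\<close>, \<open>F\<close> are equipotent: \<open>E\<close> injects into the sequences in \<open>N\<^sub>E\<close> by a
  dyadic expansion, and the sequences in the separated set \<open>N\<^sub>F\<close> inject into the Banach
  space \<open>F\<close> by \<open>s \<mapsto> r \<sigma>(s\<^sub>0 + r \<sigma>(s\<^sub>1 + \<dots>))\<close> for small \<open>r\<close>. So the cell of each
  \<open>n \<in> N\<^sub>E\<close> maps bijectively onto the cell of \<open>T n\<close>. Gluing these bijections and rescaling
  by \<open>c\<close> gives a bijection that stays within bounded distance of \<open>c T\<close>, hence is a coarse
  \<open>(M, L)\<close>-quasi-isometry.
\<close>

definition shrink :: "'a::real_normed_vector \<Rightarrow> 'a" where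
  "shrink y = y /\<^sub>R (1 + norm y)"

lemma norm_shrink_less_1: "norm (shrink y) < 1"
  by (simp add: shrink_def divide_simps add_pos_nonneg)

lemma norm_shrink_diff_le: "norm (shrink y - shrink z) \<le> 2 * norm (y - z)"
proof -
  define a b where "a = norm y" and "b = norm z"
  have a0: "a \<ge> 0" and b0: "b \<ge> 0" by (auto simp: a_def b_def)
  have "1 / (1 + a) - 1 / (1 + b) = (b - a) / ((1 + a) * (1 + b))"
    using a0 b0 by (simp add: divide_simps)
  moreover have "shrink y - shrink z = (1 / (1 + a)) *\<^sub>R (y - z) + (1 / (1 + a) - 1 / (1 + b)) *\<^sub>R z"
    by (simp add: shrink_def a_def b_def algebra_simps divide_inverse)
  ultimately have "shrink y - shrink z = (y - z) /\<^sub>R (1 + a) + ((b - a) / ((1 + a) * (1 + b))) *\<^sub>R z"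
    by (simp add: divide_inverse)
  then have "norm (shrink y - shrink z)
      \<le> norm ((y - z) /\<^sub>R (1 + a)) + norm (((b - a) / ((1 + a) * (1 + b))) *\<^sub>R z)"
    by (metis norm_triangle_ineq)
  also have "\<dots> = norm (y - z) / (1 + a) + \<bar>b - a\<bar> * (b / ((1 + a) * (1 + b)))"
    using a0 b0 by (simp add: b_def abs_mult divide_inverse mult.commute)
  also have "\<dots> \<le> norm (y - z) + \<bar>b - a\<bar>"
  proof (rule add_mono)
    show "norm (y - z) / (1 + a) \<le> norm (y - z)"
      using a0 by (simp add: divide_simps mult_le_cancel_left1)
    have "b / ((1 + a) * (1 + b)) \<le> 1"
      using a0 b0 by (simp add: divide_simps algebra_simps)
    then show "\<bar>b - a\<bar> * (b / ((1 + a) * (1 + b))) \<le> \<bar>b - a\<bar>"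
      by (rule mult_left_le) simp
  qed
  also have "\<bar>b - a\<bar> \<le> norm (y - z)"
    unfolding a_def b_def by (metis norm_triangle_ineq3 norm_minus_commute abs_minus_commute)
  finally show ?thesis by simp
qed

lemma inj_shrink: "inj shrink"
proof (rule injI)
  fix y z :: 'a
  assume eq: "shrink y = shrink z"
  have pos: "1 + norm y > 0" "1 + norm z > 0"
    by (simp_all add: add_pos_nonneg)
  have "norm y / (1 + norm y) = norm z / (1 + norm z)"
    using arg_cong[OF eq, of norm] pos by (simp add: shrink_def divide_inverse mult.commute)
  then have "norm y = norm z"
    using pos by (simp add: divide_simps algebra_simps)
  then show "y = z"
    using eq pos by (simp add: shrink_def)
qed

lemma continuous_shrink: "continuous_on UNIV shrink"
  unfolding shrink_def
  by (intro continuous_intros) (metis add_pos_nonneg zero_less_one norm_ge_zero less_irrefl)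

lemma UNIV_lepoll_ball:
  fixes m :: "'a::real_normed_vector"
  assumes "\<rho> > 0"
  shows "(UNIV :: 'a set) \<lesssim> ball m \<rho>"
  unfolding lepoll_def
proof (intro exI conjI)
  show "inj_on (\<lambda>y. m + \<rho> *\<^sub>R shrink y) UNIV"
    using assms inj_shrink by (auto simp: inj_on_def dest: injD)
  have "dist m (m + \<rho> *\<^sub>R shrink y) < \<rho>" for y
    using assms norm_shrink_less_1[of y] by (simp add: dist_norm)
  then show "(\<lambda>y. m + \<rho> *\<^sub>R shrink y) ` UNIV \<subseteq> ball m \<rho>"
    by auto
qed

lemma eqpoll_UNIV_if_ball_subset:
  fixes A :: "'a::real_normed_vector set"
  assumes "ball m \<rho> \<subseteq> A" "\<rho> > 0"
  shows "A \<approx> (UNIV :: 'a set)"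
  using UNIV_lepoll_ball[OF assms(2), of m] assms(1)
  by (meson lepoll_antisym lepoll_trans subset_UNIV subset_imp_lepoll)

primrec shrink_iter :: "real \<Rightarrow> nat \<Rightarrow> (nat \<Rightarrow> 'a::real_normed_vector) \<Rightarrow> 'a" where
  "shrink_iter r 0 s = 0"
| "shrink_iter r (Suc K) s = r *\<^sub>R shrink (s 0 + shrink_iter r K (\<lambda>k. s (Suc k)))"

definition shrink_code :: "real \<Rightarrow> (nat \<Rightarrow> 'a::real_normed_vector) \<Rightarrow> 'a" where
  "shrink_code r s = lim (\<lambda>K. shrink_iter r K s)"

lemma norm_shrink_iter_Suc_diff_le:
  assumes "0 \<le> r"
  shows "norm (shrink_iter r (Suc K) s - shrink_iter r K s) \<le> r * (2 * r) ^ K"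
proof (induction K arbitrary: s)
  case 0
  show ?case
    using assms norm_shrink_less_1[of "s 0"] by (simp add: mult_left_le)
next
  case (Suc K)
  let ?t = "\<lambda>k. s (Suc k)"
  have "norm (shrink_iter r (Suc (Suc K)) s - shrink_iter r (Suc K) s)
      = r * norm (shrink (s 0 + shrink_iter r (Suc K) ?t) - shrink (s 0 + shrink_iter r K ?t))"
    using assms by (simp add: scaleR_diff_right[symmetric])
  also have "\<dots> \<le> r * (2 * norm (shrink_iter r (Suc K) ?t - shrink_iter r K ?t))"
    using assms norm_shrink_diff_le[of "s 0 + shrink_iter r (Suc K) ?t" "s 0 + shrink_iter r K ?t"]
    by (intro mult_left_mono) auto
  also have "\<dots> \<le> r * (2 * (r * (2 * r) ^ K))"
    using assms Suc[of ?t] by (intro mult_left_mono) auto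
  finally show ?case
    by (simp add: algebra_simps)
qed

lemma shrink_iter_LIMSEQ:
  fixes s :: "nat \<Rightarrow> 'a::banach"
  assumes "0 \<le> r" "r < 1/2"
  shows "(\<lambda>K. shrink_iter r K s) \<longlonglongrightarrow> shrink_code r s"
proof -
  have "summable (\<lambda>K. r * (2 * r) ^ K)"
    using assms by (intro summable_mult summable_geometric) auto
  then have "summable (\<lambda>K. shrink_iter r (Suc K) s - shrink_iter r K s)"
    by (rule summable_comparison_test') (use norm_shrink_iter_Suc_diff_le[OF assms(1)] in auto)
  then have "convergent (\<lambda>n. \<Sum>K<n. shrink_iter r (Suc K) s - shrink_iter r K s)"
    by (rule convergentI[OF summable_LIMSEQ])
  moreover have "(\<lambda>n. \<Sum>K<n. shrink_iter r (Suc K) s - shrink_iter r K s) = (\<lambda>K. shrink_iter r K s)"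
    using sum_lessThan_telescope[of "\<lambda>K. shrink_iter r K s"] by simp
  ultimately have "convergent (\<lambda>K. shrink_iter r K s)"
    by simp
  then show ?thesis
    by (simp add: shrink_code_def convergent_LIMSEQ_iff)
qed

lemma shrink_code_unfold:
  fixes s :: "nat \<Rightarrow> 'a::banach"
  assumes "0 \<le> r" "r < 1/2"
  shows "shrink_code r s = r *\<^sub>R shrink (s 0 + shrink_code r (\<lambda>k. s (Suc k)))"
proof -
  have "(\<lambda>K. s 0 + shrink_iter r K (\<lambda>k. s (Suc k))) \<longlonglongrightarrow> s 0 + shrink_code r (\<lambda>k. s (Suc k))"
    using shrink_iter_LIMSEQ[OF assms] by (intro tendsto_intros)
  then have "(\<lambda>K. shrink (s 0 + shrink_iter r K (\<lambda>k. s (Suc k))))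
      \<longlonglongrightarrow> shrink (s 0 + shrink_code r (\<lambda>k. s (Suc k)))"
    by (rule continuous_on_tendsto_compose[OF continuous_shrink]) simp_all
  then have "(\<lambda>K. shrink_iter r (Suc K) s) \<longlonglongrightarrow> r *\<^sub>R shrink (s 0 + shrink_code r (\<lambda>k. s (Suc k)))"
    unfolding shrink_iter.simps(2) by (rule tendsto_scaleR[OF tendsto_const])
  moreover have "(\<lambda>K. shrink_iter r (Suc K) s) \<longlonglongrightarrow> shrink_code r s"
    using shrink_iter_LIMSEQ[OF assms] by (rule LIMSEQ_Suc)
  ultimately show ?thesis
    using LIMSEQ_unique by blast
qed

lemma norm_shrink_code_le:
  fixes s :: "nat \<Rightarrow> 'a::banach"
  assumes "0 \<le> r" "r < 1/2"
  shows "norm (shrink_code r s) \<le> r"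
  using shrink_code_unfold[OF assms, of s] assms mult_left_le[OF less_imp_le[OF norm_shrink_less_1]]
  by simp

lemma shrink_code_eq_imp_head_eq:
  fixes N :: "'a::banach set"
  assumes sep: "\<forall>n\<in>N. \<forall>m\<in>N. n \<noteq> m \<longrightarrow> \<delta> \<le> dist n m"
    and r: "0 < r" "r < 1/2" "2 * r < \<delta>"
    and s: "\<forall>k. s k \<in> N" "\<forall>k. s' k \<in> N" and eq: "shrink_code r s = shrink_code r s'"
  shows "s 0 = s' 0" "shrink_code r (\<lambda>k. s (Suc k)) = shrink_code r (\<lambda>k. s' (Suc k))"
proof -
  let ?a = "shrink_code r (\<lambda>k. s (Suc k))" and ?b = "shrink_code r (\<lambda>k. s' (Suc k))"
  have "shrink (s 0 + ?a) = shrink (s' 0 + ?b)"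
    using eq shrink_code_unfold[of r s] shrink_code_unfold[of r s'] r by simp
  then have sum_eq: "s 0 + ?a = s' 0 + ?b"
    by (rule injD[OF inj_shrink])
  have "s 0 - s' 0 = (s 0 + ?a) - (s' 0 + ?a)"
    by simp
  then have "dist (s 0) (s' 0) = norm (?b - ?a)"
    by (simp add: dist_norm sum_eq)
  also have "\<dots> \<le> norm ?b + norm ?a"
    by (rule norm_triangle_ineq4)
  also have "\<dots> \<le> 2 * r"
    using norm_shrink_code_le[of r "\<lambda>k. s (Suc k)"] norm_shrink_code_le[of r "\<lambda>k. s' (Suc k)"] r
    by linarith
  finally show "s 0 = s' 0"
    using sep s r by (meson linorder_not_le order_le_less_trans)
  with sum_eq show "?a = ?b"
    by simp
qed

lemma inj_on_shrink_code:
  fixes N :: "'a::banach set"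
  assumes "\<forall>n\<in>N. \<forall>m\<in>N. n \<noteq> m \<longrightarrow> \<delta> \<le> dist n m" "0 < r" "r < 1/2" "2 * r < \<delta>"
  shows "inj_on (shrink_code r) (UNIV \<rightarrow>\<^sub>E N)"
proof -
  note head_eq = shrink_code_eq_imp_head_eq[OF assms]
  have "\<forall>s s'. (\<forall>k. s k \<in> N) \<longrightarrow> (\<forall>k. s' k \<in> N) \<longrightarrow> shrink_code r s = shrink_code r s' \<longrightarrow> s k = s' k"
    for k
  proof (induction k)
    case 0
    then show ?case
      using head_eq(1) by blast
  next
    case (Suc k)
    show ?case
    proof (intro allI impI)
      fix s s' :: "nat \<Rightarrow> 'a"
      assume s: "\<forall>k. s k \<in> N" and s': "\<forall>k. s' k \<in> N" and "shrink_code r s = shrink_code r s'"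
      then have "shrink_code r (\<lambda>k. s (Suc k)) = shrink_code r (\<lambda>k. s' (Suc k))"
        by (rule head_eq(2))
      then show "s (Suc k) = s' (Suc k)"
        using Suc[rule_format, of "\<lambda>k. s (Suc k)" "\<lambda>k. s' (Suc k)"] s s' by blast
    qed
  qed
  then show ?thesis
    by (auto intro!: inj_onI simp: PiE_UNIV_domain Pi_iff)
qed

lemma separated_sequences_lepoll_UNIV:
  fixes N :: "'a::banach set"
  assumes "\<delta> > 0" "\<forall>n\<in>N. \<forall>m\<in>N. n \<noteq> m \<longrightarrow> \<delta> \<le> dist n m"
  shows "(UNIV :: nat set) \<rightarrow>\<^sub>E N \<lesssim> (UNIV :: 'a set)"
proof -
  define r where "r = min (\<delta>/4) (1/4)"
  have "0 < r" "r < 1/2" "2 * r < \<delta>"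
    using assms(1) by (auto simp: r_def)
  with assms(2) have "inj_on (shrink_code r) (UNIV \<rightarrow>\<^sub>E N)"
    by (rule inj_on_shrink_code)
  then show ?thesis
    unfolding lepoll_def by (intro exI[of _ "shrink_code r"]) simp
qed

primrec dyadic_remainder :: "('a::real_normed_vector \<Rightarrow> 'a) \<Rightarrow> nat \<Rightarrow> 'a \<Rightarrow> 'a" where
  "dyadic_remainder p 0 x = x"
| "dyadic_remainder p (Suc k) x = 2 *\<^sub>R (dyadic_remainder p k x - p (dyadic_remainder p k x))"

lemma inj_dyadic_digits:
  fixes p :: "'a::real_normed_vector \<Rightarrow> 'a"
  assumes close: "\<And>y. dist y (p y) < \<epsilon>"
  shows "inj (\<lambda>x k. p (dyadic_remainder p k x))"
proof (rule injI)
  fix x y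
  assume eq: "(\<lambda>k. p (dyadic_remainder p k x)) = (\<lambda>k. p (dyadic_remainder p k y))"
  have diff: "dyadic_remainder p k x - dyadic_remainder p k y = (2 ^ k) *\<^sub>R (x - y)" for k
  proof (induction k)
    case (Suc k)
    have "p (dyadic_remainder p k x) = p (dyadic_remainder p k y)"
      using fun_cong[OF eq, of k] by simp
    then have "dyadic_remainder p (Suc k) x - dyadic_remainder p (Suc k) y
        = 2 *\<^sub>R (dyadic_remainder p k x - dyadic_remainder p k y)"
      by (simp add: algebra_simps)
    with Suc show ?case
      by simp
  qed simp
  have remainder_bound: "norm (dyadic_remainder p (Suc k) z) \<le> 2 * \<epsilon>" for k z
    using close[of "dyadic_remainder p k z"] by (simp add: dist_norm)
  have bounded: "2 ^ Suc k * norm (x - y) \<le> 4 * \<epsilon>" for k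
  proof -
    have "2 ^ Suc k * norm (x - y) = norm (dyadic_remainder p (Suc k) x - dyadic_remainder p (Suc k) y)"
      using diff[of "Suc k"] by simp
    also have "\<dots> \<le> norm (dyadic_remainder p (Suc k) x) + norm (dyadic_remainder p (Suc k) y)"
      by (rule norm_triangle_ineq4)
    also have "\<dots> \<le> 4 * \<epsilon>"
      using remainder_bound[of k x] remainder_bound[of k y] by simp
    finally show ?thesis .
  qed
  show "x = y"
  proof (rule ccontr)
    assume "x \<noteq> y"
    then have pos: "norm (x - y) > 0"
      by simp
    obtain k where "4 * \<epsilon> / norm (x - y) < 2 ^ k"
      using real_arch_pow[of 2 "4 * \<epsilon> / norm (x - y)"] by auto
    then have "4 * \<epsilon> < 2 ^ k * norm (x - y)"
      using pos by (simp add: divide_simps)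
    also have "\<dots> \<le> 2 ^ Suc k * norm (x - y)"
      using pos by simp
    finally show False
      using bounded[of k] by simp
  qed
qed

lemma UNIV_lepoll_sequences_in_dense:
  fixes N :: "'a::real_normed_vector set"
  assumes dense: "\<forall>x. \<exists>n\<in>N. dist x n < \<epsilon>"
  shows "(UNIV :: 'a set) \<lesssim> (UNIV :: nat set) \<rightarrow>\<^sub>E N"
proof -
  define p where "p y = (SOME n. n \<in> N \<and> dist y n < \<epsilon>)" for y
  have p: "p y \<in> N" "dist y (p y) < \<epsilon>" for y
    unfolding p_def using someI_ex[of "\<lambda>n. n \<in> N \<and> dist y n < \<epsilon>"] dense by blast+
  have "inj (\<lambda>x k. p (dyadic_remainder p k x))"
    using p(2) by (rule inj_dyadic_digits)
  moreover have "range (\<lambda>x k. p (dyadic_remainder p k x)) \<subseteq> UNIV \<rightarrow>\<^sub>E N"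
    using p(1) by (auto simp: PiE_UNIV_domain)
  ultimately show ?thesis
    unfolding lepoll_def by blast
qed

lemma UNIV_lepoll_if_bij_dense_separated:
  fixes NE :: "'a::real_normed_vector set" and NF :: "'b::banach set"
  assumes "\<forall>x. \<exists>n\<in>NE. dist x n < \<epsilon>"
    and "\<delta> > 0" "\<forall>n\<in>NF. \<forall>m\<in>NF. n \<noteq> m \<longrightarrow> \<delta> \<le> dist n m"
    and "bij_betw T NE NF"
  shows "(UNIV :: 'a set) \<lesssim> (UNIV :: 'b set)"
proof -
  have "(UNIV :: 'a set) \<lesssim> (UNIV :: nat set) \<rightarrow>\<^sub>E NE"
    using assms(1) by (rule UNIV_lepoll_sequences_in_dense)
  also have "\<dots> \<lesssim> (UNIV :: nat set) \<rightarrow>\<^sub>E NF"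
    using assms(4) by (intro lepoll_funcset_right eqpoll_imp_lepoll) (auto simp: eqpoll_def)
  also have "\<dots> \<lesssim> (UNIV :: 'b set)"
    using assms(2,3) by (rule separated_sequences_lepoll_UNIV)
  finally show ?thesis .
qed

lemma UNIV_eqpoll_if_bij_nets:
  fixes NE :: "'a::banach set" and NF :: "'b::banach set"
  assumes "is_net UNIV NE" "is_net UNIV NF" "bij_betw T NE NF"
  shows "(UNIV :: 'a set) \<approx> (UNIV :: 'b set)"
proof -
  obtain \<epsilon>E \<delta>E where "\<delta>E > 0" and E: "\<forall>x. \<exists>n\<in>NE. dist x n < \<epsilon>E"
      "\<forall>n\<in>NE. \<forall>m\<in>NE. n \<noteq> m \<longrightarrow> \<delta>E \<le> dist n m"
    using assms(1) by (auto simp: is_net_def is_net_eps_delta_def)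
  obtain \<epsilon>F \<delta>F where "\<delta>F > 0" and F: "\<forall>y. \<exists>n\<in>NF. dist y n < \<epsilon>F"
      "\<forall>n\<in>NF. \<forall>m\<in>NF. n \<noteq> m \<longrightarrow> \<delta>F \<le> dist n m"
    using assms(2) by (auto simp: is_net_def is_net_eps_delta_def)
  have "(UNIV :: 'a set) \<lesssim> (UNIV :: 'b set)"
    using E(1) \<open>\<delta>F > 0\<close> F(2) assms(3) by (rule UNIV_lepoll_if_bij_dense_separated)
  moreover have "(UNIV :: 'b set) \<lesssim> (UNIV :: 'a set)"
    using F(1) \<open>\<delta>E > 0\<close> E(2) bij_betw_inv_into[OF assms(3)] by (rule UNIV_lepoll_if_bij_dense_separated)
  ultimately show ?thesis
    by (rule lepoll_antisym)
qed

lemma net_retraction: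
  fixes N :: "'a::metric_space set"
  assumes "is_net_eps_delta UNIV \<epsilon> \<delta> N" "\<epsilon> > 0" "\<delta> > 0"
  obtains p :: "'a \<Rightarrow> 'a" and \<rho> where "\<rho> > 0" "range p = N" "\<And>x. dist x (p x) < \<epsilon>"
    "\<And>n x. n \<in> N \<Longrightarrow> dist x n < \<rho> \<Longrightarrow> p x = n"
proof -
  define \<rho> where "\<rho> = min (\<delta>/2) \<epsilon>"
  have dense: "\<forall>x. \<exists>n\<in>N. dist x n < \<epsilon>" and sep: "\<forall>n\<in>N. \<forall>m\<in>N. n \<noteq> m \<longrightarrow> \<delta> \<le> dist n m"
    using assms(1) by (auto simp: is_net_eps_delta_def)
  have unique: "n = n'" if "n \<in> N" "n' \<in> N" "dist x n < \<rho>" "dist x n' < \<rho>" for x n n'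
  proof (rule ccontr)
    assume "n \<noteq> n'"
    then have "\<delta> \<le> dist n n'"
      using sep that by auto
    moreover have "dist n n' \<le> dist x n + dist x n'"
      by (metis dist_commute dist_triangle)
    ultimately show False
      using that by (simp add: \<rho>_def)
  qed
  define p where "p x = (SOME n. n \<in> N \<and> dist x n < (if \<exists>n\<in>N. dist x n < \<rho> then \<rho> else \<epsilon>))" for x
  have p: "p x \<in> N \<and> dist x (p x) < (if \<exists>n\<in>N. dist x n < \<rho> then \<rho> else \<epsilon>)" for x
    unfolding p_def by (rule someI_ex) (use dense in auto)
  have \<rho>: "\<rho> > 0"
    using assms(2,3) by (simp add: \<rho>_def)
  have fixed: "p x = n" if "n \<in> N" "dist x n < \<rho>" for n x
    using p[of x] that unique by (auto split: if_splits)
  have "range p = N"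
  proof
    show "range p \<subseteq> N"
      using p by auto
    show "N \<subseteq> range p"
      using fixed \<rho> by (metis dist_self rangeI subsetI)
  qed
  moreover have "dist x (p x) < \<epsilon>" for x
    using p[of x] by (auto simp: \<rho>_def split: if_splits)
  ultimately show ?thesis
    using that \<rho> fixed by blast
qed

lemma fiberwise_bij:
  assumes "bij_betw S (range p) (range q)"
    and "\<And>i. i \<in> range p \<Longrightarrow> p -` {i} \<approx> q -` {S i}"
  obtains h where "bij h" "\<And>x. q (h x) = S (p x)"
proof -
  obtain \<beta> where \<beta>: "\<And>i. i \<in> range p \<Longrightarrow> bij_betw (\<beta> i) (p -` {i}) (q -` {S i})"
    using assms(2) unfolding eqpoll_def by metis
  define h where "h x = \<beta> (p x) x" for x
  have fiber: "bij_betw h (p -` {i}) (q -` {S i})" if "i \<in> range p" for i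
    using \<beta>[OF that] by (rule bij_betw_cong[THEN iffD1, rotated]) (simp add: h_def)
  have disjoint: "disjoint_family_on (\<lambda>i. q -` {S i}) (range p)"
    using bij_betw_imp_inj_on[OF assms(1)] by (auto simp: disjoint_family_on_def inj_on_def)
  have domain: "(\<Union>i\<in>range p. p -` {i}) = UNIV"
    by blast
  have codomain: "(\<Union>i\<in>range p. q -` {S i}) = UNIV"
  proof -
    have "q y \<in> S ` range p" for y
      using bij_betw_imp_surj_on[OF assms(1)] by auto
    then show ?thesis
      by blast
  qed
  have "bij h"
    using bij_betw_UNION_disjoint[OF disjoint fiber] unfolding domain codomain .
  moreover have "q (h x) = S (p x)" for x
    using bij_betwE[OF fiber[of "p x"]] by simp
  ultimately show ?thesis
    using that by blast
qed

lemma net_bijection_extends: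
  fixes NE :: "'a::banach set" and NF :: "'b::banach set"
  assumes "is_net UNIV NE" "is_net UNIV NF" "bij_betw T NE NF"
  obtains h :: "'a \<Rightarrow> 'b" and p C where "bij h" "\<And>x. p x \<in> NE"
    "\<And>x. dist x (p x) \<le> C" "\<And>x. dist (h x) (T (p x)) \<le> C"
proof -
  obtain \<epsilon>E \<delta>E where E: "is_net_eps_delta UNIV \<epsilon>E \<delta>E NE" "\<epsilon>E > 0" "\<delta>E > 0"
    using assms(1) by (auto simp: is_net_def)
  obtain \<epsilon>F \<delta>F where F: "is_net_eps_delta UNIV \<epsilon>F \<delta>F NF" "\<epsilon>F > 0" "\<delta>F > 0"
    using assms(2) by (auto simp: is_net_def)
  obtain \<rho> p where p: "\<rho> > 0" "range p = NE" "\<And>x. dist x (p x) < \<epsilon>E"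
    "\<And>n x. n \<in> NE \<Longrightarrow> dist x n < \<rho> \<Longrightarrow> p x = n"
    using net_retraction[OF E] by metis
  obtain \<rho>' q where q: "\<rho>' > 0" "range q = NF" "\<And>y. dist y (q y) < \<epsilon>F"
    "\<And>n y. n \<in> NF \<Longrightarrow> dist y n < \<rho>' \<Longrightarrow> q y = n"
    using net_retraction[OF F] by metis
  have spaces: "(UNIV :: 'a set) \<approx> (UNIV :: 'b set)"
    using assms by (rule UNIV_eqpoll_if_bij_nets)
  have T: "bij_betw T (range p) (range q)"
    using assms(3) p(2) q(2) by simp
  have "p -` {i} \<approx> q -` {T i}" if "i \<in> range p" for i
  proof -
    have "i \<in> NE" "T i \<in> NF"
      using that p(2) assms(3) by (auto dest: bij_betwE)
    have "ball i \<rho> \<subseteq> p -` {i}" "ball (T i) \<rho>' \<subseteq> q -` {T i}"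
      using p(4)[OF \<open>i \<in> NE\<close>] q(4)[OF \<open>T i \<in> NF\<close>] by (auto simp: dist_commute)
    then have "p -` {i} \<approx> (UNIV :: 'a set)" "q -` {T i} \<approx> (UNIV :: 'b set)"
      using p(1) q(1) by (auto intro: eqpoll_UNIV_if_ball_subset)
    then show ?thesis
      using spaces by (meson eqpoll_sym eqpoll_trans)
  qed
  then obtain h where "bij h" and h: "\<And>x. q (h x) = T (p x)"
    using fiberwise_bij[OF T] by blast
  show ?thesis
  proof
    show "bij h"
      by fact
    show "p x \<in> NE" for x
      using p(2) by blast
    show "dist x (p x) \<le> max \<epsilon>E \<epsilon>F" "dist (h x) (T (p x)) \<le> max \<epsilon>E \<epsilon>F" for x
      using p(3)[of x] q(3)[of "h x"] h[of x] by auto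
  qed
qed

lemma dist_le_lip_const:
  assumes "C-lipschitz_on N T" "x \<in> N" "y \<in> N"
  shows "dist (T x) (T y) \<le> lip_const N T * dist x y"
proof (cases "x = y")
  case False
  define R where "R = {dist (T x) (T y) / dist x y | x y. x \<in> N \<and> y \<in> N \<and> x \<noteq> y}"
  have ratio: "dist (T x) (T y) / dist x y \<in> R"
    using assms(2,3) False by (auto simp: R_def)
  have "bdd_above R"
  proof (rule bdd_aboveI)
    fix r
    assume "r \<in> R"
    then obtain u v where "r = dist (T u) (T v) / dist u v" "u \<in> N" "v \<in> N" "u \<noteq> v"
      by (auto simp: R_def)
    then show "r \<le> C"
      using assms(1) by (simp add: lipschitz_on_def pos_divide_le_eq)
  qed
  then have "dist (T x) (T y) / dist x y \<le> lip_const N T"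
    using cSup_upper[OF ratio] ratio by (auto simp: lip_const_def R_def Let_def)
  with False show ?thesis
    by (simp add: divide_simps)
qed simp

lemma lip_const_nonneg:
  assumes "C-lipschitz_on N T"
  shows "0 \<le> lip_const N T"
proof (cases "\<exists>x\<in>N. \<exists>y\<in>N. x \<noteq> y")
  case True
  then obtain x y where "x \<in> N" "y \<in> N" "x \<noteq> y"
    by blast
  then have "0 \<le> lip_const N T * dist x y"
    using dist_le_lip_const[OF assms, of x y] zero_le_dist[of "T x" "T y"] by linarith
  with \<open>x \<noteq> y\<close> show ?thesis
    by (simp add: zero_le_mult_iff)
next
  case False
  then show ?thesis
    by (auto simp: lip_const_def Let_def)
qed

lemma net_distance_lessE:
  fixes E :: "'a::metric_space set" and F :: "'b::metric_space set"
  assumes "net_distance E F < ereal r"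
  obtains NE NF T where "is_net E NE" "is_net F NF" "bij_betw T NE NF"
    "\<exists>C. C-lipschitz_on NE T" "\<exists>C. C-lipschitz_on NF (inv_into NE T)"
    "lip_const NE T * lip_const NF (inv_into NE T) < r"
proof -
  obtain NE NF T where "is_net E NE" "is_net F NF" "bij_betw T NE NF"
    "\<exists>C. C-lipschitz_on NE T" "\<exists>C. C-lipschitz_on NF (inv_into NE T)"
    "ereal (lip_const NE T * lip_const NF (inv_into NE T)) < ereal r"
    using assms unfolding net_distance_def Inf_less_iff by blast
  then show ?thesis
    using that by simp
qed

text \<open>The witness is \<open>c = (M + b) / (M + a)\<close>: both inequalities reduce to \<open>a b \<le> M\<^sup>2\<close>.\<close>

lemma balancing_scale:
  fixes a b M :: real
  assumes "0 \<le> a" "0 \<le> b" "a * b \<le> M\<^sup>2" "M > 0"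
  obtains c where "c > 0" "c * a \<le> M" "b \<le> M * c"
proof
  let ?c = "(M + b) / (M + a)"
  show "?c > 0"
    using assms by simp
  show "?c * a \<le> M" "b \<le> M * ?c"
    using assms by (simp_all add: field_simps power2_eq_square)
qed

lemma dist_le_dist_add_if_close:
  fixes f g :: "'a \<Rightarrow> 'b::metric_space"
  assumes "\<And>x. dist (f x) (g x) \<le> D"
  shows "dist (f x) (f y) \<le> dist (g x) (g y) + 2 * D"
  using dist_triangle[of "f x" "f y" "g x"] dist_triangle[of "g x" "f y" "g y"] assms[of x] assms[of y]
    dist_commute[of "g y" "f y"] by linarith

lemma dist_bounds_if_close_to_bi_lipschitz:
  assumes "M > 0"
    and S_upper: "\<And>x y. x \<in> N \<Longrightarrow> y \<in> N \<Longrightarrow> dist (S x) (S y) \<le> M * dist x y"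
    and S_lower: "\<And>x y. x \<in> N \<Longrightarrow> y \<in> N \<Longrightarrow> dist x y \<le> M * dist (S x) (S y)"
    and p: "\<And>x. p x \<in> N" "\<And>x. dist x (p x) \<le> C"
    and h: "\<And>x. dist (h x) (S (p x)) \<le> D"
  shows "dist (h x) (h y) \<le> M * dist x y + 2 * (M * C + D)"
    and "dist x y / M - 2 * (D + C / M) \<le> dist (h x) (h y)"
proof -
  have "dist (p x) x \<le> C" for x
    using p(2) by (simp add: dist_commute)
  then have "dist (p x) (p y) \<le> dist x y + 2 * C"
    by (rule dist_le_dist_add_if_close[of p "\<lambda>x. x"])
  then have "M * dist (p x) (p y) \<le> M * dist x y + 2 * (M * C)"
    using mult_left_mono[of _ _ M] \<open>M > 0\<close> by (fastforce simp: algebra_simps)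
  moreover have "dist (h x) (h y) \<le> dist (S (p x)) (S (p y)) + 2 * D"
    using h by (rule dist_le_dist_add_if_close)
  ultimately show "dist (h x) (h y) \<le> M * dist x y + 2 * (M * C + D)"
    using S_upper[OF p(1) p(1), of x y] unfolding distrib_left by linarith
  have "dist (S (p x)) (h x) \<le> D" for x
    using h by (simp add: dist_commute)
  then have "dist (S (p x)) (S (p y)) \<le> dist (h x) (h y) + 2 * D"
    by (rule dist_le_dist_add_if_close[of "\<lambda>x. S (p x)" h])
  then have "M * dist (S (p x)) (S (p y)) \<le> M * dist (h x) (h y) + 2 * (M * D)"
    using mult_left_mono[of _ _ M] \<open>M > 0\<close> by (fastforce simp: algebra_simps)
  moreover have "dist x y \<le> dist (p x) (p y) + 2 * C"
    using p(2) by (rule dist_le_dist_add_if_close[of "\<lambda>x. x" p])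
  ultimately have "dist x y \<le> M * dist (h x) (h y) + 2 * (M * D) + 2 * C"
    using S_lower[OF p(1) p(1), of x y] by linarith
  then show "dist x y / M - 2 * (D + C / M) \<le> dist (h x) (h y)"
    using \<open>M > 0\<close> by (simp add: field_simps)
qed

lemma coarse_quasi_isometry_if_close_to_bi_lipschitz:
  fixes h :: "'a::real_normed_vector \<Rightarrow> 'b::real_normed_vector"
  assumes "M > 0" "surj h"
    and "\<And>x y. x \<in> N \<Longrightarrow> y \<in> N \<Longrightarrow> dist (S x) (S y) \<le> M * dist x y"
    and "\<And>x y. x \<in> N \<Longrightarrow> y \<in> N \<Longrightarrow> dist x y \<le> M * dist (S x) (S y)"
    and p: "\<And>x. p x \<in> N" "\<And>x. dist x (p x) \<le> C"
    and h: "\<And>x. dist (h x) (S (p x)) \<le> D"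
  shows "\<exists>L\<ge>0. coarse_quasi_isometry M L h UNIV UNIV"
proof (intro exI conjI)
  let ?L = "2 * (M * C + D + C / M)"
  have "C \<ge> 0" "D \<ge> 0"
    using p(2) h by (meson zero_le_dist order_trans)+
  then show "?L \<ge> 0"
    using \<open>M > 0\<close> by simp
  note bounds = dist_bounds_if_close_to_bi_lipschitz[OF assms(1,3,4) p h]
  have "0 \<le> M * C" "0 \<le> C / M"
    using \<open>C \<ge> 0\<close> \<open>M > 0\<close> by simp_all
  then have "dist (h x) (h y) \<le> M * dist x y + ?L" "dist x y / M - ?L \<le> dist (h x) (h y)" for x y
    using bounds[where x = x and y = y] unfolding distrib_left by linarith+
  moreover have "\<forall>y. \<exists>x. dist y (h x) \<le> 1"
    using \<open>surj h\<close> by (metis dist_self surjD zero_le_one)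
  ultimately show "coarse_quasi_isometry M ?L h UNIV UNIV"
    by (auto simp: coarse_quasi_isometry_def dist_norm intro!: exI[of _ 1])
qed

lemma scaled_bi_lipschitz_on:
  fixes T :: "'a::metric_space \<Rightarrow> 'b::real_normed_vector"
  assumes T: "bij_betw T N N'" and A: "A-lipschitz_on N T" and B: "B-lipschitz_on N' (inv_into N T)"
    and product: "lip_const N T * lip_const N' (inv_into N T) \<le> M\<^sup>2" and "M > 0"
  obtains c where "c > 0"
    "\<And>x y. x \<in> N \<Longrightarrow> y \<in> N \<Longrightarrow> dist (c *\<^sub>R T x) (c *\<^sub>R T y) \<le> M * dist x y"
    "\<And>x y. x \<in> N \<Longrightarrow> y \<in> N \<Longrightarrow> dist x y \<le> M * dist (c *\<^sub>R T x) (c *\<^sub>R T y)"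
proof -
  obtain c where c: "c > 0" "c * lip_const N T \<le> M" "lip_const N' (inv_into N T) \<le> M * c"
    using balancing_scale[OF lip_const_nonneg[OF A] lip_const_nonneg[OF B] product \<open>M > 0\<close>] .
  have dist_cT: "dist (c *\<^sub>R T x) (c *\<^sub>R T y) = c * dist (T x) (T y)" for x y
    using c(1) by (simp add: dist_norm scaleR_diff_right[symmetric])
  show ?thesis
  proof (rule that[OF c(1)])
    fix x y
    assume xy: "x \<in> N" "y \<in> N"
    have "c * dist (T x) (T y) \<le> c * (lip_const N T * dist x y)"
      using dist_le_lip_const[OF A xy] c(1) by simp
    also have "\<dots> \<le> M * dist x y"
      using c(2) by (simp add: mult.assoc[symmetric] mult_right_mono)
    finally show "dist (c *\<^sub>R T x) (c *\<^sub>R T y) \<le> M * dist x y"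
      by (simp add: dist_cT)
    have "dist x y = dist (inv_into N T (T x)) (inv_into N T (T y))"
      using T xy by (simp add: bij_betw_def)
    also have "\<dots> \<le> lip_const N' (inv_into N T) * dist (T x) (T y)"
      using dist_le_lip_const[OF B] T xy by (simp add: bij_betwE)
    also have "\<dots> \<le> M * c * dist (T x) (T y)"
      using c(3) by (simp add: mult_right_mono)
    finally show "dist x y \<le> M * dist (c *\<^sub>R T x) (c *\<^sub>R T y)"
      by (simp add: dist_cT)
  qed
qed

lemma bij_scaleR_comp:
  fixes h :: "'a \<Rightarrow> 'b::real_vector"
  assumes "bij h" "c \<noteq> 0"
  shows "bij (\<lambda>x. c *\<^sub>R h x)"
proof (rule bij_comp[OF assms(1), unfolded comp_def])
  show "bij (\<lambda>y :: 'b. c *\<^sub>R y)"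
    using assms(2) by (intro bijI injI surjI[of _ "\<lambda>y. y /\<^sub>R c"]) simp_all
qed

theorem fact2:
  fixes M :: real
  assumes "M > 0"
    and "net_distance (UNIV :: 'a::banach set) (UNIV :: 'b::banach set) < ereal (M\<^sup>2)"
  shows "\<exists>L\<ge>0. \<exists>T :: 'a \<Rightarrow> 'b. bij T \<and> coarse_quasi_isometry M L T UNIV UNIV"
proof -
  obtain NE :: "'a set" and NF :: "'b set" and T where nets: "is_net UNIV NE" "is_net UNIV NF"
    and T: "bij_betw T NE NF" and "\<exists>C. C-lipschitz_on NE T" "\<exists>C. C-lipschitz_on NF (inv_into NE T)"
    and "lip_const NE T * lip_const NF (inv_into NE T) < M\<^sup>2"
    using assms(2) by (rule net_distance_lessE)
  then obtain c where "c > 0"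
    and upper: "\<And>x y. x \<in> NE \<Longrightarrow> y \<in> NE \<Longrightarrow> dist (c *\<^sub>R T x) (c *\<^sub>R T y) \<le> M * dist x y"
    and lower: "\<And>x y. x \<in> NE \<Longrightarrow> y \<in> NE \<Longrightarrow> dist x y \<le> M * dist (c *\<^sub>R T x) (c *\<^sub>R T y)"
    using scaled_bi_lipschitz_on[OF T _ _ _ assms(1)] by (metis less_imp_le)
  obtain h p C where "bij h" and p: "\<And>x. p x \<in> NE" "\<And>x. dist x (p x) \<le> C"
    and h: "\<And>x. dist (h x) (T (p x)) \<le> C"
    using net_bijection_extends[OF nets T] by metis
  have close: "dist (c *\<^sub>R h x) (c *\<^sub>R T (p x)) \<le> c * C" for x
    using h[of x] \<open>c > 0\<close> by (simp add: dist_norm scaleR_diff_right[symmetric])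
  have "bij (\<lambda>x. c *\<^sub>R h x)"
    using \<open>bij h\<close> \<open>c > 0\<close> by (simp add: bij_scaleR_comp)
  with coarse_quasi_isometry_if_close_to_bi_lipschitz[OF assms(1) _ upper lower p close]
  show ?thesis
    by (auto simp: bij_is_surj)
qed

end
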